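(* If a connected graph $G$ of order $n$ satisfies $\mathrm{sn}(G)=n-2$, then $\mathrm{ivs}_\chi(G)=1$.
   Context: All graphs are finite and simple. For a graph $G=(V,E)$ with $k=\chi(G)$, a proper $k$-colouring is a map $c:V\to[k]$ with $c(u)\neq c(v)$ for every edge $uv$. A set $S\subseteq V$ is a determining set for $(G,c)$ if there is no proper $k$-colouring $c'\neq c$ with $c'(s)=c(s)$ for all $s\in S$; a critical set is an inclusion-minimal determining set. $\mathrm{sn}(G)$ is the minimum size of a critical set over all proper $\chi(G)$-colourings $c$ of $G$ (equivalently, the minimum number of vertices coloured in a partial colouring that extends uniquely to a proper $\chi(G)$-colouring). The independent chromatic vertex stability number $\mathrm{ivs}_\chi(G)$ is the size of a smallest independent set $S\subseteq V$ such that $\chi(G\setminus S)<\chi(G)$. *)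

theory Defs
  imports Main
begin

definition simple_graph :: "'a set \<Rightarrow> 'a set set \<Rightarrow> bool" where
  "simple_graph V E \<longleftrightarrow> finite V \<and> (\<forall>e\<in>E. e \<subseteq> V \<and> card e = 2)"

definition adj :: "'a set set \<Rightarrow> 'a \<Rightarrow> 'a \<Rightarrow> bool" where
  "adj E u v \<longleftrightarrow> {u, v} \<in> E"

definition connected_graph :: "'a set \<Rightarrow> 'a set set \<Rightarrow> bool" where
  "connected_graph V E \<longleftrightarrow> V \<noteq> {} \<and> (\<forall>u\<in>V. \<forall>v\<in>V. (adj E)\<^sup>*\<^sup>* u v)"

definition proper_colouring :: "'a set \<Rightarrow> 'a set set \<Rightarrow> nat \<Rightarrow> ('a \<Rightarrow> nat) \<Rightarrow> bool" where
  "proper_colouring V E k c \<longleftrightarrow>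
     (\<forall>v\<in>V. c v \<in> {1..k}) \<and> (\<forall>u\<in>V. \<forall>v\<in>V. {u, v} \<in> E \<longrightarrow> c u \<noteq> c v)"

definition chi :: "'a set \<Rightarrow> 'a set set \<Rightarrow> nat" where
  "chi V E = (LEAST k. \<exists>c. proper_colouring V E k c)"

definition determining_set :: "'a set \<Rightarrow> 'a set set \<Rightarrow> ('a \<Rightarrow> nat) \<Rightarrow> 'a set \<Rightarrow> bool" where
  "determining_set V E c S \<longleftrightarrow> S \<subseteq> V \<and>
     \<not> (\<exists>c'. proper_colouring V E (chi V E) c' \<and> (\<exists>v\<in>V. c' v \<noteq> c v) \<and> (\<forall>s\<in>S. c' s = c s))"

definition critical_set :: "'a set \<Rightarrow> 'a set set \<Rightarrow> ('a \<Rightarrow> nat) \<Rightarrow> 'a set \<Rightarrow> bool" where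
  "critical_set V E c S \<longleftrightarrow> determining_set V E c S \<and>
     (\<forall>T. T \<subset> S \<longrightarrow> \<not> determining_set V E c T)"

definition sn :: "'a set \<Rightarrow> 'a set set \<Rightarrow> nat" where
  "sn V E = Min {card S | S c. proper_colouring V E (chi V E) c \<and> critical_set V E c S}"

definition independent_set :: "'a set \<Rightarrow> 'a set set \<Rightarrow> 'a set \<Rightarrow> bool" where
  "independent_set V E S \<longleftrightarrow> S \<subseteq> V \<and> (\<forall>u\<in>S. \<forall>v\<in>S. {u, v} \<notin> E)"

text \<open>G minus S: the subgraph induced by V - S.\<close>
definition del_edges :: "'a set \<Rightarrow> 'a set set \<Rightarrow> 'a set \<Rightarrow> 'a set set" where
  "del_edges V E S = {e \<in> E. e \<subseteq> V - S}"

definition ivs_chi :: "'a set \<Rightarrow> 'a set set \<Rightarrow> nat" where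
  "ivs_chi V E = Min {card S | S. independent_set V E S \<and> chi (V - S) (del_edges V E S) < chi V E}"

end

theory Submission
  imports Defs
begin

text \<open>If deleting some vertex lowers \<open>\<chi>\<close>, that vertex alone witnesses \<open>ivs\<^sub>\<chi>(G) = 1\<close>.
  Otherwise fix a proper \<open>\<chi>\<close>-colouring \<open>c\<close>. Call \<open>v\<close> colour-dominating in \<open>A\<close> if it has a
  neighbour in \<open>A\<close> of every colour other than \<open>c v\<close>, and a b-vertex if it is colour-dominating
  in \<open>V\<close>. If a colour class had at most one b-vertex, recolouring its other vertices and deleting
  that b-vertex would lower \<open>\<chi>\<close>; so every colour class has two b-vertices. A vertex that is
  colour-dominating in \<open>A\<close> keeps its colour in every proper \<open>\<chi>\<close>-colouring agreeing with \<open>c\<close> on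
  \<open>A\<close>, so for a peelable triple (\<open>u\<^sub>1\<close> colour-dominating in \<open>V - {u\<^sub>1, u\<^sub>2, u\<^sub>3}\<close>, \<open>u\<^sub>2\<close> in
  \<open>V - {u\<^sub>2, u\<^sub>3}\<close>, \<open>u\<^sub>3\<close> in \<open>V - {u\<^sub>3}\<close>) the set \<open>V - {u\<^sub>1, u\<^sub>2, u\<^sub>3}\<close> is determining,
  which is impossible when \<open>sn(G) = n - 2\<close>. Excluding peelable triples forces, step by step,
  that neighbours of b-vertices are b-vertices (so by connectivity all vertices are), that no
  vertex has two neighbours of the same colour, and that the closed neighbourhood of a vertex is
  closed under adjacency; but then the second b-vertex of its colour class, which is not
  adjacent to it, cannot lie in its connected component.\<close>

definition colour_dominating :: "'a set set \<Rightarrow> nat \<Rightarrow> ('a \<Rightarrow> nat) \<Rightarrow> 'a set \<Rightarrow> 'a \<Rightarrow> bool" where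
  "colour_dominating E k c A v \<longleftrightarrow> (\<forall>i\<in>{1..k}. i \<noteq> c v \<longrightarrow> (\<exists>w\<in>A. {v, w} \<in> E \<and> c w = i))"

definition peelable_triple ::
    "'a set \<Rightarrow> 'a set set \<Rightarrow> nat \<Rightarrow> ('a \<Rightarrow> nat) \<Rightarrow> 'a \<Rightarrow> 'a \<Rightarrow> 'a \<Rightarrow> bool" where
  "peelable_triple V E k c u\<^sub>1 u\<^sub>2 u\<^sub>3 \<longleftrightarrow>
     u\<^sub>1 \<in> V \<and> u\<^sub>2 \<in> V \<and> u\<^sub>3 \<in> V \<and> distinct [u\<^sub>1, u\<^sub>2, u\<^sub>3] \<and>
     colour_dominating E k c (V - {u\<^sub>1, u\<^sub>2, u\<^sub>3}) u\<^sub>1 \<and>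
     colour_dominating E k c (V - {u\<^sub>2, u\<^sub>3}) u\<^sub>2 \<and>
     colour_dominating E k c (V - {u\<^sub>3}) u\<^sub>3"

lemma simple_graph_edgeD:
  assumes "simple_graph V E" "{u, v} \<in> E"
  shows "u \<noteq> v" "u \<in> V" "v \<in> V"
proof -
  have "{u, v} \<subseteq> V" "card {u, v} = 2" using assms unfolding simple_graph_def by auto
  then show "u \<noteq> v" "u \<in> V" "v \<in> V" by (auto split: if_splits)
qed

lemma proper_colouringD:
  assumes "proper_colouring V E k c"
  shows "v \<in> V \<Longrightarrow> c v \<in> {1..k}"
    and "u \<in> V \<Longrightarrow> v \<in> V \<Longrightarrow> {u, v} \<in> E \<Longrightarrow> c u \<noteq> c v"
  using assms unfolding proper_colouring_def by blast+

lemma chi_le: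
  assumes "proper_colouring V E k c"
  shows "chi V E \<le> k"
  unfolding chi_def using assms by (metis Least_le)

lemma exists_chi_colouring:
  assumes "simple_graph V E"
  shows "\<exists>c. proper_colouring V E (chi V E) c"
proof -
  have "finite V" using assms unfolding simple_graph_def by auto
  then obtain h where h: "bij_betw h V {0..<card V}" using ex_bij_betw_finite_nat by blast
  have "proper_colouring V E (card V) (\<lambda>v. h v + 1)"
    unfolding proper_colouring_def
  proof (intro conjI ballI impI)
    fix v assume "v \<in> V"
    then have "h v < card V" using h unfolding bij_betw_def by fastforce
    then show "h v + 1 \<in> {1..card V}" by simp
  next
    fix u v assume uv: "u \<in> V" "v \<in> V" "{u, v} \<in> E"
    then have "u \<noteq> v" using simple_graph_edgeD[OF assms] by blast
    then show "h u + 1 \<noteq> h v + 1" using h uv unfolding bij_betw_def inj_on_def by auto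
  qed
  then have "\<exists>k c. proper_colouring V E k c" by blast
  then show ?thesis unfolding chi_def by (rule LeastI_ex)
qed

lemma del_edges_empty:
  assumes "simple_graph V E"
  shows "del_edges V E {} = E"
  using assms unfolding del_edges_def simple_graph_def by auto

lemma proper_colouring_del_edges:
  assumes "proper_colouring V E k c"
  shows "proper_colouring (V - S) (del_edges V E S) k c"
  using assms unfolding proper_colouring_def del_edges_def by blast

lemma colour_dominating_mono:
  assumes "colour_dominating E' k c A v" "E' \<subseteq> E" "A \<subseteq> B"
  shows "colour_dominating E k c B v"
  using assms unfolding colour_dominating_def by blast

lemma colour_dominating_Diff:
  assumes "colour_dominating E k c A v"
    and "\<And>w. w \<in> X \<Longrightarrow> {v, w} \<in> E \<Longrightarrow> \<exists>w'\<in>A - X. {v, w'} \<in> E \<and> c w' = c w"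
  shows "colour_dominating E k c (A - X) v"
  unfolding colour_dominating_def
proof (intro ballI impI)
  fix i assume "i \<in> {1..k}" "i \<noteq> c v"
  then obtain w where w: "w \<in> A" "{v, w} \<in> E" "c w = i"
    using assms(1) unfolding colour_dominating_def by blast
  show "\<exists>w\<in>A - X. {v, w} \<in> E \<and> c w = i"
    using w assms(2)[of w] by (cases "w \<in> X") auto
qed

lemma agree_on_insert_colour_dominating:
  assumes c': "proper_colouring V E k c'" and "u \<in> V" "A \<subseteq> V"
    and dom: "colour_dominating E k c A u" and agree: "\<forall>w\<in>A. c' w = c w"
  shows "\<forall>w\<in>insert u A. c' w = c w"
proof -
  have "c' u = c u"
  proof (rule ccontr)
    assume ne: "c' u \<noteq> c u"
    have "c' u \<in> {1..k}" using proper_colouringD(1)[OF c' \<open>u \<in> V\<close>] .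
    then obtain w where w: "w \<in> A" "{u, w} \<in> E" "c w = c' u"
      using dom ne unfolding colour_dominating_def by metis
    then have "c' w = c' u" using agree by simp
    moreover have "w \<in> V" using w \<open>A \<subseteq> V\<close> by blast
    ultimately show False using proper_colouringD(2)[OF c' \<open>u \<in> V\<close> _ w(2)] by simp
  qed
  then show ?thesis using agree by simp
qed

lemma determining_set_peelable_triple:
  assumes "peelable_triple V E (chi V E) c u\<^sub>1 u\<^sub>2 u\<^sub>3"
  shows "determining_set V E c (V - {u\<^sub>1, u\<^sub>2, u\<^sub>3})"
  unfolding determining_set_def
proof (intro conjI notI)
  assume "\<exists>c'. proper_colouring V E (chi V E) c' \<and> (\<exists>v\<in>V. c' v \<noteq> c v) \<and>
    (\<forall>s\<in>V - {u\<^sub>1, u\<^sub>2, u\<^sub>3}. c' s = c s)"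
  then obtain c' where c': "proper_colouring V E (chi V E) c'" and "\<exists>v\<in>V. c' v \<noteq> c v"
    and agree\<^sub>0: "\<forall>w\<in>V - {u\<^sub>1, u\<^sub>2, u\<^sub>3}. c' w = c w" by blast
  note peel = assms[unfolded peelable_triple_def]
  note recover = agree_on_insert_colour_dominating[OF c']
  have "insert u\<^sub>1 (V - {u\<^sub>1, u\<^sub>2, u\<^sub>3}) = V - {u\<^sub>2, u\<^sub>3}" using peel by auto
  then have agree\<^sub>1: "\<forall>w\<in>V - {u\<^sub>2, u\<^sub>3}. c' w = c w"
    using recover[of u\<^sub>1 "V - {u\<^sub>1, u\<^sub>2, u\<^sub>3}"] peel agree\<^sub>0 by auto
  have "insert u\<^sub>2 (V - {u\<^sub>2, u\<^sub>3}) = V - {u\<^sub>3}" using peel by auto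
  then have agree\<^sub>2: "\<forall>w\<in>V - {u\<^sub>3}. c' w = c w"
    using recover[of u\<^sub>2 "V - {u\<^sub>2, u\<^sub>3}"] peel agree\<^sub>1 by auto
  have "insert u\<^sub>3 (V - {u\<^sub>3}) = V" using peel by auto
  then have "\<forall>w\<in>V. c' w = c w"
    using recover[of u\<^sub>3 "V - {u\<^sub>3}"] peel agree\<^sub>2 by auto
  with \<open>\<exists>v\<in>V. c' v \<noteq> c v\<close> show False by blast
qed simp

lemma sn_le_card_determining_set:
  assumes sg: "simple_graph V E" and c: "proper_colouring V E (chi V E) c"
    and S: "determining_set V E c S"
  shows "sn V E \<le> card S"
proof -
  have "finite V" using sg unfolding simple_graph_def by auto
  let ?P = "\<lambda>T. T \<subseteq> S \<and> determining_set V E c T"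
  obtain T where T: "?P T" and T_min: "\<And>T'. ?P T' \<Longrightarrow> card T \<le> card T'"
    using ex_has_least_nat[of ?P S card] S by blast
  have "S \<subseteq> V" using S unfolding determining_set_def by blast
  then have "finite S" using \<open>finite V\<close> by (rule finite_subset)
  have "critical_set V E c T"
    unfolding critical_set_def
  proof (intro conjI allI impI notI)
    fix T' assume "T' \<subset> T" "determining_set V E c T'"
    then have "card T \<le> card T'" using T T_min by blast
    moreover have "card T' < card T"
      using \<open>T' \<subset> T\<close> T \<open>finite S\<close> by (meson psubset_card_mono finite_subset)
    ultimately show False by simp
  qed (use T in blast)
  let ?M = "{card S | S c. proper_colouring V E (chi V E) c \<and> critical_set V E c S}"
  have "?M \<subseteq> card ` Pow V" unfolding critical_set_def determining_set_def by blast
  then have "finite ?M" using \<open>finite V\<close> by (meson finite_Pow_iff finite_imageI finite_subset)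
  moreover have "card T \<in> ?M" using \<open>critical_set V E c T\<close> c by blast
  ultimately have "sn V E \<le> card T" unfolding sn_def by simp
  also have "card T \<le> card S" using T \<open>finite S\<close> by (simp add: card_mono)
  finally show ?thesis .
qed

lemma ivs_chi_eq_1:
  assumes sg: "simple_graph V E" and "v \<in> V"
    and critical: "chi (V - {v}) (del_edges V E {v}) < chi V E"
  shows "ivs_chi V E = 1"
proof -
  have "finite V" using sg unfolding simple_graph_def by auto
  let ?M = "{card S | S. independent_set V E S \<and> chi (V - S) (del_edges V E S) < chi V E}"
  have "independent_set V E {v}"
    unfolding independent_set_def using \<open>v \<in> V\<close> simple_graph_edgeD(1)[OF sg] by blast
  then have "1 \<in> ?M" using critical by force
  moreover have "?M \<subseteq> card ` Pow V" unfolding independent_set_def by blast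
  then have "finite ?M" using \<open>finite V\<close> by (meson finite_Pow_iff finite_imageI finite_subset)
  moreover have "0 \<notin> ?M"
  proof
    assume "0 \<in> ?M"
    then obtain S where "card S = 0" "S \<subseteq> V" "chi (V - S) (del_edges V E S) < chi V E"
      unfolding independent_set_def by auto
    then have "S = {}" using \<open>finite V\<close> finite_subset by fastforce
    with \<open>chi (V - S) (del_edges V E S) < chi V E\<close> show False by (simp add: del_edges_empty[OF sg])
  qed
  ultimately show ?thesis unfolding ivs_chi_def by (intro Min_eqI) (auto simp: not_less_eq_eq)
qed

lemma proper_colouring_avoiding_colour:
  assumes d: "proper_colouring V E k d" and j: "j \<in> {1..k}" and avoid: "\<forall>v\<in>V. d v \<noteq> j"
  shows "\<exists>e. proper_colouring V E (k - 1) e"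
proof -
  \<comment> \<open>move colour \<open>k\<close> into the unused slot \<open>j\<close>\<close>
  have "proper_colouring V E (k - 1) (\<lambda>v. if d v = k then j else d v)"
    unfolding proper_colouring_def
  proof (intro conjI ballI impI)
    fix v assume "v \<in> V"
    then have "d v \<in> {1..k}" "d v \<noteq> j" using proper_colouringD(1)[OF d] avoid by auto
    then show "(if d v = k then j else d v) \<in> {1..k - 1}" using j by auto
  next
    fix u v assume "u \<in> V" "v \<in> V" "{u, v} \<in> E"
    then have "d u \<noteq> d v" "d u \<noteq> j" "d v \<noteq> j" using proper_colouringD(2)[OF d] avoid by auto
    then show "(if d u = k then j else d u) \<noteq> (if d v = k then j else d v)" by auto
  qed
  then show ?thesis by blast
qed

lemma proper_colouring_drop_class:
  assumes c: "proper_colouring V E k c" and j: "j \<in> {1..k}"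
    and no_dom: "\<forall>v\<in>V. c v = j \<longrightarrow> \<not> colour_dominating E k c V v"
  shows "\<exists>e. proper_colouring V E (k - 1) e"
proof -
  have "\<exists>i\<in>{1..k}. i \<noteq> j \<and> (\<forall>w\<in>V. {v, w} \<in> E \<longrightarrow> c w \<noteq> i)" if "v \<in> V" "c v = j" for v
    using no_dom that unfolding colour_dominating_def by blast
  then obtain f where f: "\<And>v. v \<in> V \<Longrightarrow> c v = j \<Longrightarrow>
      f v \<in> {1..k} \<and> f v \<noteq> j \<and> (\<forall>w\<in>V. {v, w} \<in> E \<longrightarrow> c w \<noteq> f v)"
    by metis
  define d where "d v = (if c v = j then f v else c v)" for v
  have "proper_colouring V E k d"
    unfolding proper_colouring_def
  proof (intro conjI ballI impI)
    fix v assume "v \<in> V"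
    then show "d v \<in> {1..k}" using f proper_colouringD(1)[OF c] unfolding d_def by auto
  next
    fix u v assume uv: "u \<in> V" "v \<in> V" "{u, v} \<in> E"
    then have "{v, u} \<in> E" by (simp add: insert_commute)
    then show "d u \<noteq> d v"
      using uv f[of u] f[of v] proper_colouringD(2)[OF c uv] unfolding d_def by auto
  qed
  moreover have "\<forall>v\<in>V. d v \<noteq> j" using f unfolding d_def by auto
  ultimately show ?thesis using proper_colouring_avoiding_colour j by blast
qed

lemma two_colour_dominating_vertices:
  assumes sg: "simple_graph V E" and c: "proper_colouring V E (chi V E) c"
    and j: "j \<in> {1..chi V E}"
    and no_critical: "\<forall>v\<in>V. chi V E \<le> chi (V - {v}) (del_edges V E {v})"
  shows "\<exists>a a'. a \<noteq> a' \<and> a \<in> V \<and> a' \<in> V \<and> c a = j \<and> c a' = j \<and>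
     colour_dominating E (chi V E) c V a \<and> colour_dominating E (chi V E) c V a'"
proof (rule ccontr)
  let ?B = "{v\<in>V. c v = j \<and> colour_dominating E (chi V E) c V v}"
  assume "\<not> ?thesis"
  then have B_small: "?B = {} \<or> (\<exists>b\<in>V. ?B = {b})" by blast
  have "\<forall>v\<in>V - ?B. c v = j \<longrightarrow> \<not> colour_dominating (del_edges V E ?B) (chi V E) c (V - ?B) v"
    using colour_dominating_mono[of "del_edges V E ?B" _ c "V - ?B" _ E V]
    unfolding del_edges_def by blast
  then obtain e where "proper_colouring (V - ?B) (del_edges V E ?B) (chi V E - 1) e"
    using proper_colouring_drop_class[OF proper_colouring_del_edges[OF c] j]
    by blast
  then have chi_less: "chi (V - ?B) (del_edges V E ?B) < chi V E" using chi_le j by fastforce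
  from B_small show False
  proof
    assume "?B = {}"
    with chi_less show False by (simp add: del_edges_empty[OF sg])
  next
    assume "\<exists>b\<in>V. ?B = {b}"
    with chi_less no_critical show False by force
  qed
qed

lemma peelable_triple_of_independent:
  assumes sg: "simple_graph V E" and "u\<^sub>1 \<in> V" "u\<^sub>2 \<in> V" "u\<^sub>3 \<in> V" "distinct [u\<^sub>1, u\<^sub>2, u\<^sub>3]"
    and dom: "\<And>u. u \<in> {u\<^sub>1, u\<^sub>2, u\<^sub>3} \<Longrightarrow> colour_dominating E k c V u"
    and indep: "{u\<^sub>1, u\<^sub>2} \<notin> E" "{u\<^sub>1, u\<^sub>3} \<notin> E" "{u\<^sub>2, u\<^sub>3} \<notin> E"
  shows "peelable_triple V E k c u\<^sub>1 u\<^sub>2 u\<^sub>3"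
proof -
  have no_nbr: "{u, w} \<notin> E" if "u \<in> {u\<^sub>1, u\<^sub>2, u\<^sub>3}" "w \<in> {u\<^sub>1, u\<^sub>2, u\<^sub>3}" for u w
    using that indep simple_graph_edgeD(1)[OF sg] by (auto simp: insert_commute)
  have "colour_dominating E k c (V - X) u" if "u \<in> {u\<^sub>1, u\<^sub>2, u\<^sub>3}" "X \<subseteq> {u\<^sub>1, u\<^sub>2, u\<^sub>3}" for u X
    using colour_dominating_Diff[OF dom[OF that(1)], of X] no_nbr that by blast
  then show ?thesis unfolding peelable_triple_def using assms(2-5) by simp
qed

lemma peelable_triple_of_shared_colour:
  assumes sg: "simple_graph V E" and c: "proper_colouring V E k c"
    and V: "a \<in> V" "a' \<in> V" "b \<in> V" and "a \<noteq> a'" "c a' = c a" "c b \<noteq> c a"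
    and dom: "\<And>u. u \<in> {a, a', b} \<Longrightarrow> colour_dominating E k c V u"
    and other_a: "\<exists>w\<in>V. {a, w} \<in> E \<and> c w = c b \<and> w \<noteq> b"
    and other_a': "\<exists>w\<in>V. {a', w} \<in> E \<and> c w = c b \<and> w \<noteq> b"
  shows "peelable_triple V E k c a' a b"
proof -
  note no_loop = simple_graph_edgeD(1)[OF sg]
  have "{a', a} \<notin> E" using proper_colouringD(2)[OF c V(2,1)] \<open>c a' = c a\<close> by blast
  have "colour_dominating E k c (V - {a', a, b}) a'"
  proof (rule colour_dominating_Diff)
    fix w assume "w \<in> {a', a, b}" "{a', w} \<in> E"
    then have "w = b" using no_loop \<open>{a', a} \<notin> E\<close> by blast
    with other_a' \<open>c b \<noteq> c a\<close> show "\<exists>w'\<in>V - {a', a, b}. {a', w'} \<in> E \<and> c w' = c w"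
      using no_loop by fastforce
  qed (use dom in simp)
  moreover have "colour_dominating E k c (V - {a, b}) a"
  proof (rule colour_dominating_Diff)
    fix w assume "w \<in> {a, b}" "{a, w} \<in> E"
    then have "w = b" using no_loop by blast
    with other_a show "\<exists>w'\<in>V - {a, b}. {a, w'} \<in> E \<and> c w' = c w"
      using no_loop by fastforce
  qed (use dom in simp)
  moreover have "colour_dominating E k c (V - {b}) b"
    by (rule colour_dominating_Diff) (use dom no_loop[of b b] in auto)
  moreover have "a \<noteq> b" "a' \<noteq> b" using \<open>c a' = c a\<close> \<open>c b \<noteq> c a\<close> by auto
  ultimately show ?thesis
    unfolding peelable_triple_def using V \<open>a \<noteq> a'\<close> by auto
qed

lemma connected_graph_subset_closed:
  assumes "connected_graph V E" "a \<in> V" "a \<in> S"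
    and closed: "\<And>u v. u \<in> S \<Longrightarrow> {u, v} \<in> E \<Longrightarrow> v \<in> S"
  shows "V \<subseteq> S"
proof
  fix v assume "v \<in> V"
  then have "(adj E)\<^sup>*\<^sup>* a v" using assms(1,2) unfolding connected_graph_def by blast
  then show "v \<in> S"
    by (induction rule: rtranclp_induct) (use \<open>a \<in> S\<close> closed in \<open>auto simp: adj_def\<close>)
qed

locale colouring_without_peelable_triple =
  fixes V :: "'a set" and E :: "'a set set" and k :: nat and c :: "'a \<Rightarrow> nat"
  assumes simple: "simple_graph V E"
    and proper: "proper_colouring V E k c"
    and two_dominating: "\<And>j. j \<in> {1..k} \<Longrightarrow> \<exists>a a'. a \<noteq> a' \<and> a \<in> V \<and> a' \<in> V \<and> c a = j \<and> c a' = j \<and>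
      colour_dominating E k c V a \<and> colour_dominating E k c V a'"
    and no_peelable_triple: "\<not> peelable_triple V E k c u\<^sub>1 u\<^sub>2 u\<^sub>3"
begin

abbreviation b_vertex :: "'a \<Rightarrow> bool" where
  "b_vertex v \<equiv> v \<in> V \<and> colour_dominating E k c V v"

lemmas edgeD = simple_graph_edgeD[OF simple]
lemmas colourD = proper_colouringD[OF proper]

lemma edge_colours_differ: "{u, v} \<in> E \<Longrightarrow> c u \<noteq> c v"
  using colourD(2) edgeD(2,3) by blast

lemma other_b_vertex_of_colour:
  assumes "v \<in> V"
  obtains a where "a \<noteq> v" "b_vertex a" "c a = c v"
  using two_dominating[OF colourD(1)[OF assms]] by metis

lemma b_vertex_neighbour:
  assumes a: "b_vertex a" and t: "{a, t} \<in> E"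
  shows "b_vertex t" and "\<And>w. w \<in> V \<Longrightarrow> {a, w} \<in> E \<Longrightarrow> c w = c t \<Longrightarrow> w = t"
proof -
  let ?only = "\<lambda>x b. \<forall>w\<in>V. {x, w} \<in> E \<and> c w = c b \<longrightarrow> w = b"
  obtain a' where a': "a' \<noteq> a" "b_vertex a'" "c a' = c a"
    using other_b_vertex_of_colour a by blast
  have "t \<in> V" "c t \<noteq> c a" using edgeD(3)[OF t] colourD(2)[OF _ _ t] a by auto
  obtain b\<^sub>1 b\<^sub>2 where b: "b\<^sub>1 \<noteq> b\<^sub>2" "b_vertex b\<^sub>1" "b_vertex b\<^sub>2" "c b\<^sub>1 = c t" "c b\<^sub>2 = c t"
    using two_dominating[OF colourD(1)[OF \<open>t \<in> V\<close>]] by blast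
  have only: "?only a b \<or> ?only a' b" if "b_vertex b" "c b = c t" for b
  proof (rule ccontr)
    assume "\<not> (?only a b \<or> ?only a' b)"
    then have "\<exists>w\<in>V. {a, w} \<in> E \<and> c w = c b \<and> w \<noteq> b"
      "\<exists>w\<in>V. {a', w} \<in> E \<and> c w = c b \<and> w \<noteq> b" by blast+
    then have "peelable_triple V E k c a' a b"
      using peelable_triple_of_shared_colour[OF simple proper, of a a' b] a a' that \<open>c t \<noteq> c a\<close>
      by auto
    with no_peelable_triple show False by blast
  qed
  \<comment> \<open>\<open>a'\<close> has a neighbour of colour \<open>c t\<close>, so it cannot be the sole one for both \<open>b\<^sub>1\<close> and \<open>b\<^sub>2\<close>\<close>
  obtain b where b_vertex: "b_vertex b" and "c b = c t" and b_only: "?only a b"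
  proof (cases "?only a b\<^sub>1 \<or> ?only a b\<^sub>2")
    case False
    then have "?only a' b\<^sub>1" "?only a' b\<^sub>2" using only b by blast+
    moreover obtain w where "w \<in> V" "{a', w} \<in> E" "c w = c t"
      using a' colourD(1)[OF \<open>t \<in> V\<close>] \<open>c t \<noteq> c a\<close> unfolding colour_dominating_def by auto
    ultimately have "w = b\<^sub>1" "w = b\<^sub>2" using b(4,5) by simp_all
    with b(1) show ?thesis by simp
  qed (use b that in blast)
  have "t = b" using b_only[rule_format, of t] \<open>t \<in> V\<close> t \<open>c b = c t\<close> by simp
  then show "b_vertex t" using b_vertex by simp
  show "w = t" if "w \<in> V" "{a, w} \<in> E" "c w = c t" for w
    using b_only[rule_format, of w] that \<open>t = b\<close> by simp
qed

context
  assumes connected: "connected_graph V E"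
begin

lemma all_b_vertices:
  assumes "v \<in> V"
  shows "b_vertex v"
proof -
  obtain a where "b_vertex a" using other_b_vertex_of_colour[OF assms] by blast
  have "V \<subseteq> {v. b_vertex v}"
  proof (rule connected_graph_subset_closed[OF connected])
    fix u v assume "u \<in> {v. b_vertex v}" "{u, v} \<in> E"
    then show "v \<in> {v. b_vertex v}" using b_vertex_neighbour(1)[of u v] by simp
  qed (use \<open>b_vertex a\<close> in simp_all)
  with assms show ?thesis by blast
qed

lemma neighbour_of_colour_unique:
  assumes "{v, t\<^sub>1} \<in> E" "{v, t\<^sub>2} \<in> E" "c t\<^sub>1 = c t\<^sub>2"
  shows "t\<^sub>1 = t\<^sub>2"
proof -
  have "b_vertex v" "t\<^sub>2 \<in> V" using all_b_vertices edgeD assms by blast+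
  then show ?thesis using b_vertex_neighbour(2)[of v t\<^sub>1 t\<^sub>2] assms by simp
qed

lemma neighbours_adjacent:
  assumes ab: "{a, b} \<in> E" and aw: "{a, w} \<in> E" and "b \<noteq> w"
  shows "{b, w} \<in> E"
proof (rule ccontr)
  assume "{b, w} \<notin> E"
  obtain a' where a': "a' \<noteq> a" "b_vertex a'" "c a' = c a"
    using other_b_vertex_of_colour edgeD(2)[OF ab] by blast
  have "c b \<noteq> c a" "c w \<noteq> c a" using edge_colours_differ[OF ab] edge_colours_differ[OF aw] by auto
  have "{x, a'} \<notin> E" if "{a, x} \<in> E" for x
  proof
    assume "{x, a'} \<in> E"
    moreover have "{x, a} \<in> E" using that by (simp add: insert_commute)
    ultimately have "a = a'" using neighbour_of_colour_unique a'(3) by simp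
    with a'(1) show False by simp
  qed
  then have "{b, a'} \<notin> E" "{w, a'} \<notin> E" using ab aw by blast+
  moreover have "b \<in> V" "w \<in> V" "a' \<in> V" using edgeD ab aw a' by blast+
  moreover have "distinct [b, w, a']" using \<open>b \<noteq> w\<close> \<open>c b \<noteq> c a\<close> \<open>c w \<noteq> c a\<close> a'(3) by auto
  ultimately have "peelable_triple V E k c b w a'"
    using peelable_triple_of_independent[OF simple, of b w a'] all_b_vertices \<open>{b, w} \<notin> E\<close>
    by auto
  with no_peelable_triple show False by blast
qed

lemma closed_neighbourhood_closed:
  assumes y: "y \<in> insert a {w. {a, w} \<in> E}" and yz: "{y, z} \<in> E"
  shows "z \<in> insert a {w. {a, w} \<in> E}"
proof (cases "y = a")
  case False
  then have ay: "{a, y} \<in> E" using y by simp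
  show ?thesis
  proof (cases "c z = c a")
    case True
    then show ?thesis using neighbour_of_colour_unique[of y z a] yz ay by (simp add: insert_commute)
  next
    case False
    have "b_vertex a" "z \<in> V" using all_b_vertices edgeD ay yz by blast+
    then have "\<exists>w\<in>V. {a, w} \<in> E \<and> c w = c z"
      using False colourD(1) unfolding colour_dominating_def by blast
    then obtain w where w: "{a, w} \<in> E" "c w = c z" by blast
    have "w \<noteq> y" using edge_colours_differ[OF yz] w(2) by auto
    then have "{y, w} \<in> E" using neighbours_adjacent[OF ay w(1)] by blast
    then have "z = w" using neighbour_of_colour_unique[of y z w] yz w(2) by simp
    with w show ?thesis by simp
  qed
qed (use yz in simp)

end

lemma not_connected: "\<not> connected_graph V E"
proof
  assume connected: "connected_graph V E"
  then obtain a where "a \<in> V" unfolding connected_graph_def by blast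
  obtain a' where a': "a' \<noteq> a" "b_vertex a'" "c a' = c a"
    using other_b_vertex_of_colour[OF \<open>a \<in> V\<close>] by blast
  have "V \<subseteq> insert a {w. {a, w} \<in> E}"
    by (rule connected_graph_subset_closed[OF connected \<open>a \<in> V\<close>])
      (use closed_neighbourhood_closed[OF connected] in simp_all)
  then have "{a, a'} \<in> E" using a' by blast
  with a'(3) show False using edge_colours_differ by force
qed

end

lemma exists_peelable_triple:
  assumes "simple_graph V E" "connected_graph V E" "proper_colouring V E k c"
    and "\<And>j. j \<in> {1..k} \<Longrightarrow> \<exists>a a'. a \<noteq> a' \<and> a \<in> V \<and> a' \<in> V \<and> c a = j \<and> c a' = j \<and>
      colour_dominating E k c V a \<and> colour_dominating E k c V a'"
  shows "\<exists>u\<^sub>1 u\<^sub>2 u\<^sub>3. peelable_triple V E k c u\<^sub>1 u\<^sub>2 u\<^sub>3"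
  using colouring_without_peelable_triple.not_connected[of V E k c] assms
  unfolding colouring_without_peelable_triple_def by blast

theorem lemma1:
  fixes V :: "'a set" and E :: "'a set set" and n :: nat
  assumes "simple_graph V E"
    and "connected_graph V E"
    and "card V = n"
    and "int (sn V E) = int n - 2"
  shows "ivs_chi V E = 1"
proof (cases "\<exists>v\<in>V. chi (V - {v}) (del_edges V E {v}) < chi V E")
  case True
  then show ?thesis using ivs_chi_eq_1[OF assms(1)] by blast
next
  case False
  obtain c where c: "proper_colouring V E (chi V E) c" using exists_chi_colouring[OF assms(1)] by blast
  have "\<forall>v\<in>V. chi V E \<le> chi (V - {v}) (del_edges V E {v})" using False by (simp add: not_less)
  then obtain u\<^sub>1 u\<^sub>2 u\<^sub>3 where peel: "peelable_triple V E (chi V E) c u\<^sub>1 u\<^sub>2 u\<^sub>3"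
    using exists_peelable_triple[OF assms(1,2) c] two_colour_dominating_vertices[OF assms(1) c] by blast
  have "sn V E \<le> card (V - {u\<^sub>1, u\<^sub>2, u\<^sub>3})"
    using sn_le_card_determining_set[OF assms(1) c determining_set_peelable_triple[OF peel]] .
  moreover have "finite V" using assms(1) unfolding simple_graph_def by blast
  moreover have "{u\<^sub>1, u\<^sub>2, u\<^sub>3} \<subseteq> V" "card {u\<^sub>1, u\<^sub>2, u\<^sub>3} = 3"
    using peel unfolding peelable_triple_def by auto
  ultimately have "sn V E + 3 \<le> card V"
    using card_Diff_subset[of "{u\<^sub>1, u\<^sub>2, u\<^sub>3}" V] card_mono[of V "{u\<^sub>1, u\<^sub>2, u\<^sub>3}"] by simp
  with assms(3,4) show ?thesis by linarith
qed

end
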